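(* Let $M$ be a pointed metric space and $\mu\in S_{\mathcal{F}(M)}$. Suppose that for every $\eta>0$, $\mu$ can be written as a norm-convergent series $\mu=\sum_{k=1}^\infty a_k m_{x_ky_k}$ with $a_k\in\mathbb{R}$, $x_k\neq y_k$, $\sum_{k}|a_k|<1+\eta$, and such that each pair $(x_k,y_k)$ is discretely connectable in $M$. Then $\mu$ is a $\Delta$-point of $\mathcal{F}(M)$.
   Context: For a pointed metric space $(M,d)$, ${\mathrm{Lip}}_0(M)$ is the space of Lipschitz $f:M\to\mathbb{R}$ vanishing at the base point, normed by the Lipschitz constant; $\mathcal{F}(M)$ is the closed linear span of the point evaluations $\delta(x)$ in ${\mathrm{Lip}}_0(M)^*$. For $x\ne y$ the molecule is $m_{xy}=(\delta(x)-\delta(y))/d(x,y)\in S_{\mathcal{F}(M)}$. Points $x,y$ are $\varepsilon$-discretely connectable if there are $p_0=x,p_1,\dots,p_{n+1}=y$ in $M$ with $d(p_i,p_{i+1})<\varepsilon$ for all $i$ and $\sum_{i=0}^nd(p_i,p_{i+1})<d(x,y)+\varepsilon$; discretely connectable if this holds for every $\varepsilon>0$. A point $z\in S_X$ of a Banach space is a $\Delta$-point if $\sup_{w\in S}\|z-w\|=2$ for every slice $S=\{w\in B_X:f(w)>1-\alpha\}$ ($f\in S_{X^*}$, $\alpha>0$) of $B_X$ with $z\in S$. *)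

theory Defs
  imports "HOL-Analysis.Analysis"
begin

text \<open>Pointed metric space: the whole type 'a (a metric space) with base point b.  Elements of Lip_0(M)^* are
  represented as functionals on 'a => real that vanish outside Lip_0(M)
  (so that they are determined by their values on Lip_0(M)).\<close>

definition Lip0 :: "'a::metric_space \<Rightarrow> ('a \<Rightarrow> real) set" where
  "Lip0 b = {f. f b = 0 \<and> (\<exists>C. C-lipschitz_on UNIV f)}"

definition Lip0_ball :: "'a::metric_space \<Rightarrow> ('a \<Rightarrow> real) set" where
  "Lip0_ball b = {f. f b = 0 \<and> 1-lipschitz_on UNIV f}"

definition dnorm :: "'a::metric_space \<Rightarrow> (('a \<Rightarrow> real) \<Rightarrow> real) \<Rightarrow> real" where
  "dnorm b \<phi> = Sup {\<bar>\<phi> f\<bar> | f. f \<in> Lip0_ball b}"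

definition Lip0_dual :: "'a::metric_space \<Rightarrow> (('a \<Rightarrow> real) \<Rightarrow> real) set" where
  "Lip0_dual b = {\<phi>. (\<forall>f. f \<notin> Lip0 b \<longrightarrow> \<phi> f = 0)
      \<and> (\<forall>f\<in>Lip0 b. \<forall>g\<in>Lip0 b. \<phi> (\<lambda>x. f x + g x) = \<phi> f + \<phi> g)
      \<and> (\<forall>f\<in>Lip0 b. \<forall>c. \<phi> (\<lambda>x. c * f x) = c * \<phi> f)
      \<and> bdd_above {\<bar>\<phi> f\<bar> | f. f \<in> Lip0_ball b}}"

definition delta :: "'a::metric_space \<Rightarrow> 'a \<Rightarrow> ('a \<Rightarrow> real) \<Rightarrow> real" where
  "delta b x = (\<lambda>f. if f \<in> Lip0 b then f x else 0)"

definition molecule :: "'a::metric_space \<Rightarrow> 'a \<Rightarrow> 'a \<Rightarrow> ('a \<Rightarrow> real) \<Rightarrow> real" where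
  "molecule b x y = (\<lambda>f. (delta b x f - delta b y f) / dist x y)"

definition free_space :: "'a::metric_space \<Rightarrow> (('a \<Rightarrow> real) \<Rightarrow> real) set" where
  "free_space b = {\<mu> \<in> Lip0_dual b. \<forall>\<epsilon>>0. \<exists>n::nat. \<exists>c::nat \<Rightarrow> real. \<exists>x::nat \<Rightarrow> 'a.
       dnorm b (\<lambda>f. \<mu> f - (\<Sum>i<n. c i * delta b (x i) f)) < \<epsilon>}"

definition eps_discretely_connectable :: "real \<Rightarrow> 'a::metric_space \<Rightarrow> 'a \<Rightarrow> bool" where
  "eps_discretely_connectable \<epsilon> x y \<longleftrightarrow>
     (\<exists>(n::nat) (p::nat \<Rightarrow> 'a). p 0 = x \<and> p (Suc n) = y
        \<and> (\<forall>i\<le>n. dist (p i) (p (Suc i)) < \<epsilon>)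
        \<and> (\<Sum>i\<le>n. dist (p i) (p (Suc i))) < dist x y + \<epsilon>)"

definition discretely_connectable :: "'a::metric_space \<Rightarrow> 'a \<Rightarrow> bool" where
  "discretely_connectable x y \<longleftrightarrow> (\<forall>\<epsilon>>0. eps_discretely_connectable \<epsilon> x y)"

definition free_dual_sphere :: "'a::metric_space \<Rightarrow> ((('a \<Rightarrow> real) \<Rightarrow> real) \<Rightarrow> real) set" where
  "free_dual_sphere b = {g.
      (\<forall>u\<in>free_space b. \<forall>v\<in>free_space b. g (\<lambda>f. u f + v f) = g u + g v)
    \<and> (\<forall>u\<in>free_space b. \<forall>c. g (\<lambda>f. c * u f) = c * g u)
    \<and> bdd_above {\<bar>g w\<bar> | w. w \<in> free_space b \<and> dnorm b w \<le> 1}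
    \<and> Sup {\<bar>g w\<bar> | w. w \<in> free_space b \<and> dnorm b w \<le> 1} = 1}"

definition free_slice :: "'a::metric_space \<Rightarrow> ((('a \<Rightarrow> real) \<Rightarrow> real) \<Rightarrow> real) \<Rightarrow> real
     \<Rightarrow> (('a \<Rightarrow> real) \<Rightarrow> real) set" where
  "free_slice b g \<alpha> = {w \<in> free_space b. dnorm b w \<le> 1 \<and> g w > 1 - \<alpha>}"

definition Delta_point :: "'a::metric_space \<Rightarrow> (('a \<Rightarrow> real) \<Rightarrow> real) \<Rightarrow> bool" where
  "Delta_point b z \<longleftrightarrow> z \<in> free_space b \<and> dnorm b z = 1 \<and>
     (\<forall>g\<in>free_dual_sphere b. \<forall>\<alpha>>0. z \<in> free_slice b g \<alpha> \<longrightarrow>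
        Sup {dnorm b (\<lambda>f. z f - w f) | w. w \<in> free_slice b g \<alpha>} = 2)"

end

theory Submission
  imports Defs
begin

text \<open>Approximating \<mu> by a
  finitely supported element and modifying a norming function of \<mu> near \<open>v\<close> shows that every
  molecule \<open>m\<^sub>u\<^sub>v\<close> with \<open>d(u,v)\<close> small enough is at distance almost 2 from \<mu>. So it suffices to
  find arbitrarily short molecules in the slice. Averaging over a series representation of \<mu>
  with \<open>\<Sum>|a\<^sub>k| \<approx> 1\<close> gives a signed molecule \<open>\<plusminus>m\<^sub>x\<^sub>y\<close> of a discretely connectable pair deep in the
  slice; writing \<open>m\<^sub>x\<^sub>y\<close> as an almost convex combination of the molecules of an almost geodesic
  chain of short steps from \<open>x\<close> to \<open>y\<close> and averaging again gives a short molecule in the slice.\<close>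

lemma Lip0_ball_imp_Lip0: "f \<in> Lip0_ball b \<Longrightarrow> f \<in> Lip0 b"
  unfolding Lip0_ball_def Lip0_def by auto

lemma zero_in_Lip0_ball: "(\<lambda>x. 0) \<in> Lip0_ball b"
  unfolding Lip0_ball_def by (auto intro: lipschitz_onI)

lemma Lip0_ball_dist_le: "f \<in> Lip0_ball b \<Longrightarrow> \<bar>f x - f y\<bar> \<le> dist x y"
  unfolding Lip0_ball_def using lipschitz_onD[of 1 UNIV f x y] by (auto simp: dist_real_def)

lemma Lip0_ball_abs_le: "f \<in> Lip0_ball b \<Longrightarrow> \<bar>f x\<bar> \<le> dist x b"
  using Lip0_ball_dist_le[of f b x b] unfolding Lip0_ball_def by auto

lemma Lip0_ball_uminus: "f \<in> Lip0_ball b \<Longrightarrow> (\<lambda>x. - f x) \<in> Lip0_ball b"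
  unfolding Lip0_ball_def using lipschitz_on_minus by fastforce

lemma Lip0_add: "f \<in> Lip0 b \<Longrightarrow> g \<in> Lip0 b \<Longrightarrow> (\<lambda>x. f x + g x) \<in> Lip0 b"
  unfolding Lip0_def using lipschitz_on_add by fastforce

lemma Lip0_cmult: "f \<in> Lip0 b \<Longrightarrow> (\<lambda>x. c * f x) \<in> Lip0 b"
  unfolding Lip0_def using lipschitz_on_cmult_real by fastforce

lemma Lip0_dualI:
  assumes "\<And>f. f \<notin> Lip0 b \<Longrightarrow> \<phi> f = 0"
    and "\<And>f g. f \<in> Lip0 b \<Longrightarrow> g \<in> Lip0 b \<Longrightarrow> \<phi> (\<lambda>x. f x + g x) = \<phi> f + \<phi> g"
    and "\<And>f c. f \<in> Lip0 b \<Longrightarrow> \<phi> (\<lambda>x. c * f x) = c * \<phi> f"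
    and "\<And>f. f \<in> Lip0_ball b \<Longrightarrow> \<bar>\<phi> f\<bar> \<le> C"
  shows "\<phi> \<in> Lip0_dual b"
  using assms unfolding Lip0_dual_def bdd_above_def by blast

lemma Lip0_dual_homogeneous: "\<phi> \<in> Lip0_dual b \<Longrightarrow> f \<in> Lip0 b \<Longrightarrow> \<phi> (\<lambda>x. c * f x) = c * \<phi> f"
  unfolding Lip0_dual_def by blast

lemma Lip0_dual_bdd_above: "\<phi> \<in> Lip0_dual b \<Longrightarrow> bdd_above {\<bar>\<phi> f\<bar> | f. f \<in> Lip0_ball b}"
  unfolding Lip0_dual_def by auto

lemma abs_le_dnorm: "\<phi> \<in> Lip0_dual b \<Longrightarrow> f \<in> Lip0_ball b \<Longrightarrow> \<bar>\<phi> f\<bar> \<le> dnorm b \<phi>"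
  unfolding dnorm_def by (rule cSup_upper) (auto dest: Lip0_dual_bdd_above)

lemma dnorm_leI: "(\<And>f. f \<in> Lip0_ball b \<Longrightarrow> \<bar>\<phi> f\<bar> \<le> C) \<Longrightarrow> dnorm b \<phi> \<le> C"
  unfolding dnorm_def using zero_in_Lip0_ball by (intro cSup_least) auto

lemma dnorm_nonneg: "\<phi> \<in> Lip0_dual b \<Longrightarrow> 0 \<le> dnorm b \<phi>"
  using abs_le_dnorm[OF _ zero_in_Lip0_ball] by fastforce

lemma dnorm_add_le:
  "u \<in> Lip0_dual b \<Longrightarrow> v \<in> Lip0_dual b \<Longrightarrow> dnorm b (\<lambda>f. u f + v f) \<le> dnorm b u + dnorm b v"
  by (rule dnorm_leI) (smt (verit) abs_le_dnorm)

lemma dnorm_cmult_le: "u \<in> Lip0_dual b \<Longrightarrow> dnorm b (\<lambda>f. c * u f) \<le> \<bar>c\<bar> * dnorm b u"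
  by (rule dnorm_leI) (simp add: abs_mult abs_le_dnorm mult_left_mono)

lemma Lip0_dual_add:
  assumes "u \<in> Lip0_dual b" "v \<in> Lip0_dual b" shows "(\<lambda>f. u f + v f) \<in> Lip0_dual b"
proof (rule Lip0_dualI[where C = "dnorm b u + dnorm b v"])
  show "\<bar>u f + v f\<bar> \<le> dnorm b u + dnorm b v" if "f \<in> Lip0_ball b" for f
    using abs_le_dnorm[OF assms(1) that] abs_le_dnorm[OF assms(2) that] by linarith
qed (use assms in \<open>auto simp: Lip0_dual_def algebra_simps\<close>)

lemma Lip0_dual_cmult:
  assumes "u \<in> Lip0_dual b" shows "(\<lambda>f. c * u f) \<in> Lip0_dual b"
proof (rule Lip0_dualI[where C = "\<bar>c\<bar> * dnorm b u"])
  show "\<bar>c * u f\<bar> \<le> \<bar>c\<bar> * dnorm b u" if "f \<in> Lip0_ball b" for f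
    using abs_le_dnorm[OF assms that] by (simp add: abs_mult mult_left_mono)
qed (use assms in \<open>auto simp: Lip0_dual_def algebra_simps\<close>)

lemma Lip0_dual_diff: "u \<in> Lip0_dual b \<Longrightarrow> v \<in> Lip0_dual b \<Longrightarrow> (\<lambda>f. u f - v f) \<in> Lip0_dual b"
  using Lip0_dual_add[OF _ Lip0_dual_cmult[of v b "-1"], of u] by simp

lemma Lip0_dual_sum:
  "finite I \<Longrightarrow> (\<And>i. i \<in> I \<Longrightarrow> w i \<in> Lip0_dual b) \<Longrightarrow> (\<lambda>f. \<Sum>i\<in>I. c i * w i f) \<in> Lip0_dual b"
proof (induction I rule: finite_induct)
  case empty
  show ?case by (rule Lip0_dualI[where C = 0]) auto
next
  case (insert j I)
  then show ?case by (simp add: Lip0_dual_add Lip0_dual_cmult)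
qed

lemma delta_in_Lip0_dual: "delta b x \<in> Lip0_dual b"
  by (rule Lip0_dualI[where C = "dist x b"])
    (auto simp: delta_def Lip0_add Lip0_cmult Lip0_ball_abs_le dest: Lip0_ball_imp_Lip0)

lemma molecule_eq_delta_diff:
  "molecule b x y = (\<lambda>f. (1 / dist x y) * delta b x f + (-1 / dist x y) * delta b y f)"
  unfolding molecule_def by (rule ext) (simp add: diff_divide_distrib)

lemma molecule_in_Lip0_dual: "molecule b x y \<in> Lip0_dual b"
  unfolding molecule_eq_delta_diff by (intro Lip0_dual_add Lip0_dual_cmult delta_in_Lip0_dual)

lemma abs_molecule_le_1: "f \<in> Lip0_ball b \<Longrightarrow> \<bar>molecule b x y f\<bar> \<le> 1"
  using Lip0_ball_dist_le[of f b x y] Lip0_ball_imp_Lip0[of f b]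
  by (cases "x = y") (auto simp: molecule_def delta_def divide_le_eq_1 abs_divide)

lemma dnorm_molecule_le_1: "dnorm b (molecule b x y) \<le> 1"
  by (rule dnorm_leI[OF abs_molecule_le_1])

lemma molecule_swap: "molecule b y x = (\<lambda>f. - molecule b x y f)"
  unfolding molecule_def by (rule ext) (simp add: dist_commute minus_divide_left)

definition delta_span :: "'a::metric_space \<Rightarrow> (('a \<Rightarrow> real) \<Rightarrow> real) set" where
  "delta_span b = {\<nu>. \<exists>(n::nat) c x. \<nu> = (\<lambda>f. \<Sum>i<n. c i * delta b (x i) f)}"

lemma free_space_iff:
  "\<mu> \<in> free_space b \<longleftrightarrow>
     \<mu> \<in> Lip0_dual b \<and> (\<forall>\<epsilon>>0. \<exists>\<nu>\<in>delta_span b. dnorm b (\<lambda>f. \<mu> f - \<nu> f) < \<epsilon>)"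
proof -
  have "(\<exists>\<nu>\<in>delta_span b. dnorm b (\<lambda>f. \<mu> f - \<nu> f) < \<epsilon>)
    \<longleftrightarrow> (\<exists>(n::nat) c x. dnorm b (\<lambda>f. \<mu> f - (\<Sum>i<n. c i * delta b (x i) f)) < \<epsilon>)" for \<epsilon>
  proof
    assume "\<exists>(n::nat) c x. dnorm b (\<lambda>f. \<mu> f - (\<Sum>i<n. c i * delta b (x i) f)) < \<epsilon>"
    then obtain n :: nat and c x where "dnorm b (\<lambda>f. \<mu> f - (\<Sum>i<n. c i * delta b (x i) f)) < \<epsilon>"
      by blast
    then show "\<exists>\<nu>\<in>delta_span b. dnorm b (\<lambda>f. \<mu> f - \<nu> f) < \<epsilon>"
      by (intro bexI[of _ "\<lambda>f. \<Sum>i<n. c i * delta b (x i) f"]) (auto simp: delta_span_def)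
  qed (auto simp: delta_span_def)
  then show ?thesis
    unfolding free_space_def by simp
qed

lemma free_space_imp_Lip0_dual: "\<mu> \<in> free_space b \<Longrightarrow> \<mu> \<in> Lip0_dual b"
  by (simp add: free_space_iff)

lemma delta_span_imp_Lip0_dual: "\<nu> \<in> delta_span b \<Longrightarrow> \<nu> \<in> Lip0_dual b"
  unfolding delta_span_def by (auto intro: Lip0_dual_sum delta_in_Lip0_dual)

lemma sum_lessThan_concat:
  "(\<Sum>i<p + (q::nat). if i < p then F i else G (i - p)) = (\<Sum>i<p. F i) + (\<Sum>i<q. G i :: 'a::comm_monoid_add)"
proof (induction q)
  case 0
  then show ?case by (auto intro: sum.cong)
next
  case (Suc q)
  then show ?case by (simp add: add.assoc)
qed

lemma delta_span_add: "\<nu> \<in> delta_span b \<Longrightarrow> \<nu>' \<in> delta_span b \<Longrightarrow> (\<lambda>f. \<nu> f + \<nu>' f) \<in> delta_span b"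
proof -
  assume "\<nu> \<in> delta_span b" "\<nu>' \<in> delta_span b"
  then obtain n n' :: nat and c x c' x' where
    \<nu>: "\<nu> = (\<lambda>f. \<Sum>i<n. c i * delta b (x i) f)" and \<nu>': "\<nu>' = (\<lambda>f. \<Sum>i<n'. c' i * delta b (x' i) f)"
    unfolding delta_span_def by blast
  define d where "d i = (if i < n then c i else c' (i - n))" for i
  define z where "z i = (if i < n then x i else x' (i - n))" for i
  have "(\<Sum>i<n + n'. d i * delta b (z i) f) = \<nu> f + \<nu>' f" for f
  proof -
    have "(\<Sum>i<n + n'. d i * delta b (z i) f)
        = (\<Sum>i<n + n'. if i < n then c i * delta b (x i) f else c' (i - n) * delta b (x' (i - n)) f)"
      by (rule sum.cong) (simp_all add: d_def z_def)
    also have "\<dots> = \<nu> f + \<nu>' f"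
      unfolding \<nu> \<nu>'
      using sum_lessThan_concat[where p = n and q = n' and F = "\<lambda>i. c i * delta b (x i) f"
          and G = "\<lambda>i. c' i * delta b (x' i) f"]
      by simp
    finally show ?thesis .
  qed
  then have "(\<lambda>f. \<nu> f + \<nu>' f) = (\<lambda>f. \<Sum>i<n + n'. d i * delta b (z i) f)"
    by simp
  then show ?thesis unfolding delta_span_def by (intro CollectI exI)
qed

lemma delta_span_cmult: "\<nu> \<in> delta_span b \<Longrightarrow> (\<lambda>f. k * \<nu> f) \<in> delta_span b"
proof -
  assume "\<nu> \<in> delta_span b"
  then obtain n :: nat and c x where \<nu>: "\<nu> = (\<lambda>f. \<Sum>i<n. c i * delta b (x i) f)"
    unfolding delta_span_def by blast
  have "(\<lambda>f. k * \<nu> f) = (\<lambda>f. \<Sum>i<n. (k * c i) * delta b (x i) f)"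
    unfolding \<nu> by (simp add: sum_distrib_left mult.assoc)
  then show ?thesis unfolding delta_span_def by (intro CollectI exI)
qed

lemma free_space_add:
  assumes u: "u \<in> free_space b" and v: "v \<in> free_space b"
  shows "(\<lambda>f. u f + v f) \<in> free_space b"
  unfolding free_space_iff
proof (intro conjI allI impI)
  show "(\<lambda>f. u f + v f) \<in> Lip0_dual b"
    using u v by (intro Lip0_dual_add free_space_imp_Lip0_dual)
  fix \<epsilon> :: real assume "\<epsilon> > 0"
  then obtain \<nu> \<nu>' where \<nu>: "\<nu> \<in> delta_span b" "dnorm b (\<lambda>f. u f - \<nu> f) < \<epsilon>/2"
    and \<nu>': "\<nu>' \<in> delta_span b" "dnorm b (\<lambda>f. v f - \<nu>' f) < \<epsilon>/2"
    using u v unfolding free_space_iff by (meson half_gt_zero)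
  have "dnorm b (\<lambda>f. (u f - \<nu> f) + (v f - \<nu>' f)) \<le> dnorm b (\<lambda>f. u f - \<nu> f) + dnorm b (\<lambda>f. v f - \<nu>' f)"
    using u v \<nu>(1) \<nu>'(1)
    by (intro dnorm_add_le Lip0_dual_diff free_space_imp_Lip0_dual delta_span_imp_Lip0_dual)
  then have "dnorm b (\<lambda>f. u f + v f - (\<nu> f + \<nu>' f)) < \<epsilon>"
    using \<nu>(2) \<nu>'(2) by (simp add: algebra_simps)
  then show "\<exists>\<nu>''\<in>delta_span b. dnorm b (\<lambda>f. u f + v f - \<nu>'' f) < \<epsilon>"
    using delta_span_add[OF \<nu>(1) \<nu>'(1)] by (intro bexI[of _ "\<lambda>f. \<nu> f + \<nu>' f"]) auto
qed

lemma free_space_cmult: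
  assumes u: "u \<in> free_space b"
  shows "(\<lambda>f. k * u f) \<in> free_space b"
  unfolding free_space_iff
proof (intro conjI allI impI)
  show "(\<lambda>f. k * u f) \<in> Lip0_dual b"
    using u by (intro Lip0_dual_cmult free_space_imp_Lip0_dual)
  fix \<epsilon> :: real assume "\<epsilon> > 0"
  then obtain \<nu> where \<nu>: "\<nu> \<in> delta_span b" "dnorm b (\<lambda>f. u f - \<nu> f) < \<epsilon> / (\<bar>k\<bar> + 1)"
    using u unfolding free_space_iff by (metis abs_ge_zero add_nonneg_pos divide_pos_pos zero_less_one)
  have "dnorm b (\<lambda>f. k * (u f - \<nu> f)) \<le> \<bar>k\<bar> * dnorm b (\<lambda>f. u f - \<nu> f)"
    using u \<nu>(1) by (intro dnorm_cmult_le Lip0_dual_diff free_space_imp_Lip0_dual delta_span_imp_Lip0_dual)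
  also have "\<dots> \<le> \<bar>k\<bar> * (\<epsilon> / (\<bar>k\<bar> + 1))"
    using \<nu>(2) by (intro mult_left_mono) auto
  also have "\<dots> < \<epsilon>"
    using \<open>\<epsilon> > 0\<close> by (simp add: field_simps)
  finally have "dnorm b (\<lambda>f. k * u f - k * \<nu> f) < \<epsilon>"
    by (simp add: algebra_simps)
  then show "\<exists>\<nu>'\<in>delta_span b. dnorm b (\<lambda>f. k * u f - \<nu>' f) < \<epsilon>"
    using delta_span_cmult[OF \<nu>(1)] by (intro bexI[of _ "\<lambda>f. k * \<nu> f"]) auto
qed

lemma delta_span_imp_free_space: "\<nu> \<in> delta_span b \<Longrightarrow> \<nu> \<in> free_space b"
proof -
  assume \<nu>: "\<nu> \<in> delta_span b"
  have "dnorm b (\<lambda>f. 0) \<le> 0"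
    by (rule dnorm_leI) simp
  then show ?thesis
    using \<nu> delta_span_imp_Lip0_dual[OF \<nu>] unfolding free_space_iff by (auto intro!: bexI[of _ \<nu>])
qed

lemma free_space_zero: "(\<lambda>f. 0) \<in> free_space b"
  by (rule delta_span_imp_free_space) (auto simp: delta_span_def intro!: exI[of _ "0::nat"])

lemma free_space_diff: "u \<in> free_space b \<Longrightarrow> v \<in> free_space b \<Longrightarrow> (\<lambda>f. u f - v f) \<in> free_space b"
  using free_space_add[OF _ free_space_cmult[of v b "-1"], of u] by simp

lemma free_space_sum:
  "finite I \<Longrightarrow> (\<And>i. i \<in> I \<Longrightarrow> w i \<in> free_space b) \<Longrightarrow> (\<lambda>f. \<Sum>i\<in>I. c i * w i f) \<in> free_space b"
  by (induction I rule: finite_induct) (simp_all add: free_space_zero free_space_add free_space_cmult)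

lemma delta_in_free_space: "delta b x \<in> free_space b"
proof (rule delta_span_imp_free_space)
  show "delta b x \<in> delta_span b"
    unfolding delta_span_def by (auto intro!: exI[of _ "Suc 0"] exI[of _ "\<lambda>_. 1"] exI[of _ "\<lambda>_. x"])
qed

lemma molecule_in_free_space: "molecule b x y \<in> free_space b"
  unfolding molecule_eq_delta_diff by (intro free_space_add free_space_cmult delta_in_free_space)

context
  fixes b :: "'a::metric_space" and g
  assumes g: "g \<in> free_dual_sphere b"
begin

lemma free_dual_sphere_add:
  "u \<in> free_space b \<Longrightarrow> v \<in> free_space b \<Longrightarrow> g (\<lambda>f. u f + v f) = g u + g v"
  using g unfolding free_dual_sphere_def by blast

lemma free_dual_sphere_cmult: "u \<in> free_space b \<Longrightarrow> g (\<lambda>f. c * u f) = c * g u"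
  using g unfolding free_dual_sphere_def by blast

lemma free_dual_sphere_diff:
  "u \<in> free_space b \<Longrightarrow> v \<in> free_space b \<Longrightarrow> g (\<lambda>f. u f - v f) = g u - g v"
  using free_dual_sphere_add[OF _ free_space_cmult[of v b "-1"], of u]
    free_dual_sphere_cmult[of v "-1"] by simp

lemma free_dual_sphere_sum:
  "finite I \<Longrightarrow> (\<And>i. i \<in> I \<Longrightarrow> w i \<in> free_space b) \<Longrightarrow>
     g (\<lambda>f. \<Sum>i\<in>I. c i * w i f) = (\<Sum>i\<in>I. c i * g (w i))"
proof (induction I rule: finite_induct)
  case empty
  show ?case using free_dual_sphere_cmult[OF free_space_zero, of 0] by simp
next
  case (insert j I)
  then show ?case
    by (simp add: free_dual_sphere_add free_dual_sphere_cmult free_space_cmult free_space_sum)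
qed

lemma free_dual_sphere_abs_le_1:
  assumes "w \<in> free_space b" "dnorm b w \<le> 1"
  shows "\<bar>g w\<bar> \<le> 1"
proof -
  have "\<bar>g w\<bar> \<le> Sup {\<bar>g w\<bar> | w. w \<in> free_space b \<and> dnorm b w \<le> 1}"
    using g assms unfolding free_dual_sphere_def by (intro cSup_upper) auto
  also have "\<dots> = 1"
    using g unfolding free_dual_sphere_def by blast
  finally show ?thesis .
qed

lemma free_dual_sphere_abs_le_dnorm:
  assumes w: "w \<in> free_space b"
  shows "\<bar>g w\<bar> \<le> dnorm b w"
proof (rule dense_ge)
  fix r assume r: "dnorm b w < r"
  then have "r > 0"
    using dnorm_nonneg[OF free_space_imp_Lip0_dual[OF w]] by linarith
  have "dnorm b (\<lambda>f. (1 / r) * w f) \<le> \<bar>1 / r\<bar> * dnorm b w"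
    using w by (intro dnorm_cmult_le free_space_imp_Lip0_dual)
  also have "\<dots> \<le> 1"
    using r \<open>r > 0\<close> by (simp add: field_simps)
  finally have "\<bar>g (\<lambda>f. (1 / r) * w f)\<bar> \<le> 1"
    by (intro free_dual_sphere_abs_le_1 free_space_cmult w)
  then have "\<bar>g w\<bar> / r \<le> 1"
    using \<open>r > 0\<close> by (simp only: free_dual_sphere_cmult[OF w]) (simp add: abs_mult)
  then show "\<bar>g w\<bar> \<le> r"
    using \<open>r > 0\<close> by (simp add: divide_le_eq_1)
qed

end

lemma exists_norming_function:
  assumes \<mu>: "\<mu> \<in> Lip0_dual b" and r: "r < dnorm b \<mu>"
  shows "\<exists>f\<in>Lip0_ball b. r < \<mu> f"
proof -
  have "{\<bar>\<mu> f\<bar> | f. f \<in> Lip0_ball b} \<noteq> {}"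
    using zero_in_Lip0_ball by blast
  then have "\<exists>z\<in>{\<bar>\<mu> f\<bar> | f. f \<in> Lip0_ball b}. r < z"
    using r less_cSup_iff[OF _ Lip0_dual_bdd_above[OF \<mu>]] unfolding dnorm_def by simp
  then obtain f where f: "f \<in> Lip0_ball b" "r < \<bar>\<mu> f\<bar>"
    by blast
  show ?thesis
  proof (cases "0 \<le> \<mu> f")
    case True
    with f show ?thesis by auto
  next
    case False
    have "\<mu> (\<lambda>x. - f x) = - \<mu> f"
      using Lip0_dual_homogeneous[OF \<mu> Lip0_ball_imp_Lip0[OF f(1)], of "-1"] by simp
    then have "r < \<mu> (\<lambda>x. - f x)"
      using f(2) False by simp
    then show ?thesis
      using Lip0_ball_uminus[OF f(1)] by blast
  qed
qed

text \<open>The function \<open>p\<close> agrees with \<open>f\<close> at \<open>u\<close> and climbs with slope one towards \<open>v\<close>, so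
  its normalisation \<open>h\<close> is normed by the molecule \<open>m\<^sub>v\<^sub>u\<close> while staying uniformly close to \<open>f\<close>.\<close>
lemma Lip0_ball_molecule_peak:
  assumes f: "f \<in> Lip0_ball b" and "u \<noteq> v"
  shows "\<exists>h\<in>Lip0_ball b. molecule b u v h = -1 \<and> (\<forall>y. \<bar>h y - f y\<bar> \<le> 2 * dist u v)"
proof -
  define d where "d = dist u v"
  have "d > 0" using \<open>u \<noteq> v\<close> by (simp add: d_def)
  define p where "p y = max (f y) (f u + d - dist y v)" for y
  define h where "h y = p y - p b" for y
  have f_lip: "\<bar>f x - f y\<bar> \<le> dist x y" for x y
    using Lip0_ball_dist_le[OF f] .
  have "\<bar>p x - p y\<bar> \<le> dist x y" for x y
  proof -
    have "\<bar>dist y v - dist x v\<bar> \<le> dist x y"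
      using dist_triangle[of x v y] dist_triangle[of y v x] by (simp add: dist_commute abs_le_iff)
    then show ?thesis
      unfolding p_def using f_lip[of x y] by (simp add: max_def abs_le_iff)
  qed
  then have h_ball: "h \<in> Lip0_ball b"
    unfolding Lip0_ball_def by (auto simp: h_def dist_real_def intro: lipschitz_onI)
  have p_bump: "0 \<le> p y - f y \<and> p y - f y \<le> 2 * d" for y
  proof -
    have "f u - f y \<le> d + dist y v"
      using f_lip[of u y] dist_triangle[of u y v] dist_commute[of v y] unfolding d_def abs_le_iff
      by linarith
    then show ?thesis using \<open>d > 0\<close> by (simp add: p_def max_def)
  qed
  have "f b = 0" using f unfolding Lip0_ball_def by simp
  then have close: "\<bar>h y - f y\<bar> \<le> 2 * d" for y
    using p_bump[of y] p_bump[of b] unfolding h_def abs_le_iff by linarith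
  have "f v \<le> f u + d"
    using f_lip[of v u] by (simp add: d_def dist_commute abs_le_iff)
  then have "h u - h v = - d"
    unfolding h_def p_def by (simp add: d_def)
  then have "molecule b u v h = -1"
    using Lip0_ball_imp_Lip0[OF h_ball] \<open>d > 0\<close> by (simp add: molecule_def delta_def d_def)
  then show ?thesis
    using h_ball close unfolding d_def by blast
qed

lemma delta_span_sup_norm_bound:
  assumes "\<nu> \<in> delta_span b"
  shows "\<exists>C\<ge>0. \<forall>f h r. f \<in> Lip0 b \<longrightarrow> h \<in> Lip0 b \<longrightarrow> (\<forall>y. \<bar>h y - f y\<bar> \<le> r) \<longrightarrow>
           \<bar>\<nu> h - \<nu> f\<bar> \<le> C * r"
proof -
  obtain n :: nat and c x where \<nu>: "\<nu> = (\<lambda>f. \<Sum>i<n. c i * delta b (x i) f)"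
    using assms unfolding delta_span_def by blast
  have "\<bar>\<nu> h - \<nu> f\<bar> \<le> (\<Sum>i<n. \<bar>c i\<bar>) * r"
    if "f \<in> Lip0 b" "h \<in> Lip0 b" "\<forall>y. \<bar>h y - f y\<bar> \<le> r" for f h r
  proof -
    have "\<bar>\<nu> h - \<nu> f\<bar> = \<bar>\<Sum>i<n. c i * (h (x i) - f (x i))\<bar>"
      using that by (simp add: \<nu> delta_def sum_subtractf[symmetric] algebra_simps)
    also have "\<dots> \<le> (\<Sum>i<n. \<bar>c i\<bar> * r)"
      using that by (intro order_trans[OF sum_abs] sum_mono) (simp add: abs_mult mult_left_mono)
    finally show ?thesis by (simp add: sum_distrib_right)
  qed
  moreover have "(\<Sum>i<n. \<bar>c i\<bar>) \<ge> 0"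
    by (simp add: sum_nonneg)
  ultimately show ?thesis by blast
qed

lemma dnorm_diff_short_molecule_gt:
  assumes \<mu>: "\<mu> \<in> free_space b" and norm: "dnorm b \<mu> = 1" and "\<epsilon> > 0"
  shows "\<exists>\<delta>>0. \<forall>u v. u \<noteq> v \<longrightarrow> dist u v < \<delta> \<longrightarrow> 2 - \<epsilon> < dnorm b (\<lambda>f. \<mu> f - molecule b u v f)"
proof -
  obtain f where f: "f \<in> Lip0_ball b" "1 - \<epsilon>/4 < \<mu> f"
    using exists_norming_function[OF free_space_imp_Lip0_dual[OF \<mu>], of "1 - \<epsilon>/4"] norm \<open>\<epsilon> > 0\<close>
    by auto
  have "\<epsilon>/4 > 0" using \<open>\<epsilon> > 0\<close> by simp
  then obtain \<nu> where \<nu>: "\<nu> \<in> delta_span b" "dnorm b (\<lambda>f. \<mu> f - \<nu> f) < \<epsilon>/4"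
    using \<mu> unfolding free_space_iff by blast
  then obtain C where "C \<ge> 0" and C: "\<And>f h r. f \<in> Lip0 b \<Longrightarrow> h \<in> Lip0 b \<Longrightarrow>
      (\<forall>y. \<bar>h y - f y\<bar> \<le> r) \<Longrightarrow> \<bar>\<nu> h - \<nu> f\<bar> \<le> C * r"
    using delta_span_sup_norm_bound by blast
  define \<delta> where "\<delta> = \<epsilon> / (8 * (C + 1))"
  have "\<delta> > 0" using \<open>\<epsilon> > 0\<close> \<open>C \<ge> 0\<close> by (simp add: \<delta>_def)
  have "C * (2 * \<delta>) < \<epsilon>/4"
    using \<open>\<epsilon> > 0\<close> \<open>C \<ge> 0\<close> by (simp add: \<delta>_def field_simps)
  have \<mu>\<nu>: "\<bar>\<mu> k - \<nu> k\<bar> < \<epsilon>/4" if "k \<in> Lip0_ball b" for k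
    using abs_le_dnorm[OF Lip0_dual_diff[OF free_space_imp_Lip0_dual[OF \<mu>]
        delta_span_imp_Lip0_dual[OF \<nu>(1)]] that] \<nu>(2) by simp
  have "2 - \<epsilon> < dnorm b (\<lambda>f. \<mu> f - molecule b u v f)" if "u \<noteq> v" "dist u v < \<delta>" for u v
  proof -
    obtain h where h: "h \<in> Lip0_ball b" "molecule b u v h = -1" "\<forall>y. \<bar>h y - f y\<bar> \<le> 2 * dist u v"
      using Lip0_ball_molecule_peak[OF f(1) \<open>u \<noteq> v\<close>] by blast
    have "\<bar>\<nu> h - \<nu> f\<bar> \<le> C * (2 * dist u v)"
      using C h(3) f(1) h(1) Lip0_ball_imp_Lip0 by blast
    also have "\<dots> \<le> C * (2 * \<delta>)"
      using \<open>C \<ge> 0\<close> that(2) by (simp add: mult_left_mono)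
    finally have "1 - \<epsilon> < \<mu> h"
      using \<mu>\<nu>[OF f(1)] \<mu>\<nu>[OF h(1)] f(2) \<open>C * (2 * \<delta>) < \<epsilon>/4\<close>
      unfolding abs_le_iff abs_less_iff by linarith
    also have "\<dots> = \<mu> h - molecule b u v h - 1"
      using h(2) by simp
    also have "\<dots> \<le> dnorm b (\<lambda>f. \<mu> f - molecule b u v f) - 1"
      using abs_le_dnorm[OF Lip0_dual_diff[OF free_space_imp_Lip0_dual[OF \<mu>] molecule_in_Lip0_dual[of b u v]] h(1)]
      by linarith
    finally show ?thesis by simp
  qed
  then show ?thesis using \<open>\<delta> > 0\<close> by blast
qed

lemma exists_large_term_of_weighted_sum:
  fixes w v :: "'i \<Rightarrow> real"
  assumes "finite I" and nonneg: "\<And>i. i \<in> I \<Longrightarrow> 0 \<le> w i" and less: "t * sum w I < (\<Sum>i\<in>I. w i * v i)"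
  shows "\<exists>i\<in>I. 0 < w i \<and> t < v i"
proof (rule ccontr)
  assume "\<not> ?thesis"
  then have "w i * v i \<le> w i * t" if "i \<in> I" for i
    using nonneg[OF that] that by (cases "w i = 0") (auto simp: not_less intro: mult_left_mono)
  then have "(\<Sum>i\<in>I. w i * v i) \<le> t * sum w I"
    by (simp add: sum_mono sum_distrib_left mult.commute)
  with less show False by simp
qed

lemma dist_le_path_length:
  fixes p :: "nat \<Rightarrow> 'a::metric_space"
  shows "dist (p 0) (p (Suc n)) \<le> (\<Sum>i\<le>n. dist (p i) (p (Suc i)))"
proof (induction n)
  case (Suc n)
  then show ?case
    using dist_triangle[of "p 0" "p (Suc (Suc n))" "p (Suc n)"] by simp
qed simp

lemma molecule_path_decomposition:
  assumes "p 0 = x" "p (Suc n) = y"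
  shows "molecule b x y =
    (\<lambda>f. \<Sum>i\<le>n. (dist (p i) (p (Suc i)) / dist x y) * molecule b (p i) (p (Suc i)) f)"
proof
  fix f
  show "molecule b x y f = (\<Sum>i\<le>n. (dist (p i) (p (Suc i)) / dist x y) * molecule b (p i) (p (Suc i)) f)"
  proof (cases "f \<in> Lip0 b")
    case False
    then show ?thesis by (simp add: molecule_def delta_def)
  next
    case True
    have "dist (p i) (p (Suc i)) * molecule b (p i) (p (Suc i)) f = f (p i) - f (p (Suc i))" for i
      using True by (cases "p i = p (Suc i)") (simp_all add: molecule_def delta_def)
    then have "(\<Sum>i\<le>n. (dist (p i) (p (Suc i)) / dist x y) * molecule b (p i) (p (Suc i)) f)
        = (\<Sum>i\<le>n. f (p i) - f (p (Suc i))) / dist x y"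
      by (simp add: sum_divide_distrib)
    also have "\<dots> = molecule b x y f"
      using True assms sum_telescope[of "\<lambda>i. f (p i)" n] by (simp add: molecule_def delta_def)
    finally show ?thesis ..
  qed
qed

text \<open>Writing \<open>m\<^sub>x\<^sub>y\<close> as a combination of the molecules of an almost geodesic chain with
  short steps, the weights sum to almost one, so by averaging one step molecule lies almost as
  deep in the slice as \<open>m\<^sub>x\<^sub>y\<close>.\<close>
lemma discretely_connectable_short_molecule:
  assumes g: "g \<in> free_dual_sphere b" and "x \<noteq> y" and conn: "discretely_connectable x y"
    and "\<delta> > 0" "\<gamma> > 0" "t \<le> 1" and deep: "t + \<gamma> < g (\<lambda>f. s * molecule b x y f)"
  shows "\<exists>u v. u \<noteq> v \<and> dist u v < \<delta> \<and> t < g (\<lambda>f. s * molecule b u v f)"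
proof -
  define d where "d = dist x y"
  have "d > 0" using \<open>x \<noteq> y\<close> by (simp add: d_def)
  then have "min \<delta> (d * \<gamma>) > 0" using \<open>\<delta> > 0\<close> \<open>\<gamma> > 0\<close> by simp
  then obtain n and p :: "nat \<Rightarrow> 'a" where p: "p 0 = x" "p (Suc n) = y"
    and short: "\<forall>i\<le>n. dist (p i) (p (Suc i)) < min \<delta> (d * \<gamma>)"
    and length: "(\<Sum>i\<le>n. dist (p i) (p (Suc i))) < d + min \<delta> (d * \<gamma>)"
    using conn unfolding discretely_connectable_def eps_discretely_connectable_def d_def by blast
  define w where "w i = dist (p i) (p (Suc i)) / d" for i
  define m where "m i = (\<lambda>f. s * molecule b (p i) (p (Suc i)) f)" for i
  have "(\<lambda>f. s * molecule b x y f) = (\<lambda>f. \<Sum>i\<le>n. w i * m i f)"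
    unfolding molecule_path_decomposition[OF p, of b] w_def m_def d_def
    by (simp add: sum_distrib_left mult_ac)
  then have "g (\<lambda>f. s * molecule b x y f) = (\<Sum>i\<le>n. w i * g (m i))"
    using free_dual_sphere_sum[OF g, of "{..n}" m w] by (simp add: m_def free_space_cmult molecule_in_free_space)
  moreover have "t * sum w {..n} \<le> t + \<gamma>"
  proof -
    define L where "L = (\<Sum>i\<le>n. dist (p i) (p (Suc i)))"
    have "sum w {..n} = L / d"
      by (simp add: w_def L_def sum_divide_distrib)
    moreover have "d \<le> L"
      using dist_le_path_length[of p n] p by (simp add: L_def d_def)
    moreover have "L \<le> d * (1 + \<gamma>)"
      using length min.cobounded2[of \<delta> "d * \<gamma>"] unfolding L_def by (simp add: algebra_simps)
    ultimately have "1 \<le> sum w {..n}" "sum w {..n} \<le> 1 + \<gamma>"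
      using \<open>d > 0\<close> by (simp_all add: le_divide_eq divide_le_eq mult.commute)
    then have "t * (sum w {..n} - 1) \<le> 1 * (sum w {..n} - 1)"
      using \<open>t \<le> 1\<close> by (intro mult_right_mono) auto
    then show ?thesis using \<open>sum w {..n} \<le> 1 + \<gamma>\<close> by (simp add: algebra_simps)
  qed
  ultimately obtain i where "i \<le> n" "0 < w i" "t < g (m i)"
    using exists_large_term_of_weighted_sum[of "{..n}" w t "\<lambda>i. g (m i)"] deep \<open>d > 0\<close>
    by (force simp: w_def)
  then show ?thesis
    using short unfolding w_def m_def by (intro exI[of _ "p i"] exI[of _ "p (Suc i)"]) auto
qed

definition connectable_molecular_series :: "'a::metric_space \<Rightarrow> (('a \<Rightarrow> real) \<Rightarrow> real) \<Rightarrow> real \<Rightarrow> bool" where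
  "connectable_molecular_series b \<mu> \<eta> \<longleftrightarrow>
     (\<exists>(a::nat \<Rightarrow> real) (x::nat \<Rightarrow> 'a) (y::nat \<Rightarrow> 'a).
        (\<forall>k. x k \<noteq> y k) \<and> summable (\<lambda>k. \<bar>a k\<bar>) \<and> (\<Sum>k. \<bar>a k\<bar>) < 1 + \<eta>
      \<and> (\<lambda>n. dnorm b (\<lambda>f. \<mu> f - (\<Sum>k<n. a k * molecule b (x k) (y k) f))) \<longlonglongrightarrow> 0
      \<and> (\<forall>k. discretely_connectable (x k) (y k)))"

lemma mult_le_add_if_near_one:
  fixes t A \<gamma> :: real
  assumes "-2 \<le> t" "t \<le> 1" "1 - \<gamma>/2 \<le> A" "A \<le> 1 + \<gamma>"
  shows "t * A \<le> t + \<gamma>"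
proof (cases "1 \<le> A")
  case True
  then have "t * (A - 1) \<le> 1 * (A - 1)"
    using assms(2) by (intro mult_right_mono) auto
  then show ?thesis using assms(4) by (simp add: algebra_simps)
next
  case False
  then have "(- t) * (1 - A) \<le> 2 * (\<gamma>/2)"
    using assms(1,3) by (intro mult_mono) auto
  then show ?thesis by (simp add: algebra_simps)
qed

lemma dnorm_le_diff_add:
  assumes "\<mu> \<in> Lip0_dual b" "\<nu> \<in> Lip0_dual b"
  shows "dnorm b \<mu> \<le> dnorm b (\<lambda>f. \<mu> f - \<nu> f) + dnorm b \<nu>"
  using dnorm_add_le[OF Lip0_dual_diff[OF assms] assms(2)] by simp

lemma dnorm_sum_molecules_le:
  "dnorm b (\<lambda>f. \<Sum>k\<in>I. a k * molecule b (x k) (y k) f) \<le> (\<Sum>k\<in>I. \<bar>a k\<bar>)"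
  by (intro dnorm_leI order_trans[OF sum_abs] sum_mono) (simp add: abs_mult abs_molecule_le_1 mult_left_le)

lemma connectable_series_signed_molecule:
  assumes g: "g \<in> free_dual_sphere b" and \<mu>: "\<mu> \<in> free_space b" "dnorm b \<mu> = 1"
    and series: "connectable_molecular_series b \<mu> \<gamma>" and "\<gamma> > 0" "-2 \<le> t"
    and deep: "t + 2 * \<gamma> < g \<mu>"
  shows "\<exists>x y s. x \<noteq> y \<and> discretely_connectable x y \<and> (s = 1 \<or> s = -1) \<and>
    t < g (\<lambda>f. s * molecule b x y f)"
proof -
  obtain a and x y :: "nat \<Rightarrow> 'a" where "\<forall>k. x k \<noteq> y k" "summable (\<lambda>k. \<bar>a k\<bar>)"
    "(\<Sum>k. \<bar>a k\<bar>) < 1 + \<gamma>" "\<forall>k. discretely_connectable (x k) (y k)"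
    and conv: "(\<lambda>n. dnorm b (\<lambda>f. \<mu> f - (\<Sum>k<n. a k * molecule b (x k) (y k) f))) \<longlonglongrightarrow> 0"
    using series unfolding connectable_molecular_series_def by blast
  note pairs = this(1,4)
  have "eventually (\<lambda>n. dnorm b (\<lambda>f. \<mu> f - (\<Sum>k<n. a k * molecule b (x k) (y k) f)) < \<gamma>/2) sequentially"
    using order_tendstoD(2)[OF conv, of "\<gamma>/2"] \<open>\<gamma> > 0\<close> by simp
  then obtain N where N: "dnorm b (\<lambda>f. \<mu> f - (\<Sum>k<N. a k * molecule b (x k) (y k) f)) < \<gamma>/2"
    unfolding eventually_sequentially by blast
  define S where "S = (\<lambda>f. \<Sum>k<N. a k * molecule b (x k) (y k) f)"
  define A where "A = (\<Sum>k<N. \<bar>a k\<bar>)"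
  have S: "S \<in> free_space b"
    unfolding S_def by (intro free_space_sum) (auto intro: molecule_in_free_space)
  have "A \<le> 1 + \<gamma>"
    using sum_le_suminf[OF \<open>summable (\<lambda>k. \<bar>a k\<bar>)\<close>, of "{..<N}"] \<open>(\<Sum>k. \<bar>a k\<bar>) < 1 + \<gamma>\<close>
    by (simp add: A_def)
  moreover have "1 - \<gamma>/2 \<le> A"
    using dnorm_le_diff_add[OF free_space_imp_Lip0_dual[OF \<mu>(1)] free_space_imp_Lip0_dual[OF S]]
      dnorm_sum_molecules_le[where b = b and I = "{..<N}" and a = a and x = x and y = y] \<mu>(2) N
    by (simp add: S_def A_def)
  moreover have "g \<mu> \<le> 1"
    using free_dual_sphere_abs_le_dnorm[OF g \<mu>(1)] \<mu>(2) by simp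
  ultimately have "t * A \<le> t + \<gamma>"
    using deep \<open>\<gamma> > 0\<close> \<open>-2 \<le> t\<close> by (intro mult_le_add_if_near_one) auto
  also have "\<dots> < g S"
    using free_dual_sphere_abs_le_dnorm[OF g free_space_diff[OF \<mu>(1) S]]
      free_dual_sphere_diff[OF g \<mu>(1) S] N deep
    by (simp add: S_def abs_le_iff)
  also have "g S = (\<Sum>k<N. \<bar>a k\<bar> * (sgn (a k) * g (molecule b (x k) (y k))))"
    unfolding S_def using free_dual_sphere_sum[OF g, of "{..<N}" "\<lambda>k. molecule b (x k) (y k)" a]
    by (simp add: molecule_in_free_space mult.assoc[symmetric] abs_mult_sgn)
  finally obtain k where "0 < \<bar>a k\<bar>" "t < sgn (a k) * g (molecule b (x k) (y k))"
    using exists_large_term_of_weighted_sum[of "{..<N}" "\<lambda>k. \<bar>a k\<bar>" t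
        "\<lambda>k. sgn (a k) * g (molecule b (x k) (y k))"]
    unfolding A_def by auto
  moreover have "sgn (a k) * g (molecule b (x k) (y k)) = g (\<lambda>f. sgn (a k) * molecule b (x k) (y k) f)"
    using free_dual_sphere_cmult[OF g molecule_in_free_space] by simp
  moreover have "sgn (a k) = 1 \<or> sgn (a k) = -1"
    using \<open>0 < \<bar>a k\<bar>\<close> by (simp add: sgn_real_def)
  ultimately show ?thesis
    using pairs by metis
qed

lemma free_slice_contains_short_molecule:
  assumes g: "g \<in> free_dual_sphere b" and \<mu>: "\<mu> \<in> free_space b" "dnorm b \<mu> = 1"
    and series: "\<forall>\<eta>>0. connectable_molecular_series b \<mu> \<eta>"
    and slice: "\<mu> \<in> free_slice b g \<alpha>" and "\<delta> > 0"
  shows "\<exists>u v. u \<noteq> v \<and> dist u v < \<delta> \<and> molecule b u v \<in> free_slice b g \<alpha>"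
proof -
  \<comment> \<open>the clamp at \<open>-2\<close> costs nothing since \<open>|g \<mu>| \<le> 1\<close>, and is needed for \<open>mult_le_add_if_near_one\<close>\<close>
  define t where "t = max (1 - \<alpha>) (-2)"
  have "\<bar>g \<mu>\<bar> \<le> 1"
    using free_dual_sphere_abs_le_dnorm[OF g \<mu>(1)] \<mu>(2) by simp
  then have "t < g \<mu>"
    using slice by (auto simp: t_def free_slice_def)
  define \<gamma> where "\<gamma> = (g \<mu> - t) / 4"
  have "\<gamma> > 0" using \<open>t < g \<mu>\<close> by (simp add: \<gamma>_def)
  have "-2 \<le> t + \<gamma>"
    using \<open>\<gamma> > 0\<close> by (simp add: t_def)
  moreover have "t + \<gamma> + 2 * \<gamma> < g \<mu>"
    using \<open>t < g \<mu>\<close> by (simp add: \<gamma>_def field_simps)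
  ultimately obtain x y s where "x \<noteq> y" "discretely_connectable x y" "s = 1 \<or> s = -1"
    and "t + \<gamma> < g (\<lambda>f. s * molecule b x y f)"
    using connectable_series_signed_molecule[OF g \<mu>] series \<open>\<gamma> > 0\<close> by blast
  moreover have "t \<le> 1"
    using \<open>t < g \<mu>\<close> \<open>\<bar>g \<mu>\<bar> \<le> 1\<close> by simp
  ultimately obtain u v where uv: "u \<noteq> v" "dist u v < \<delta>" and deep: "t < g (\<lambda>f. s * molecule b u v f)"
    using discretely_connectable_short_molecule[OF g _ _ \<open>\<delta> > 0\<close> \<open>\<gamma> > 0\<close>] by blast
  have in_slice: "molecule b p q \<in> free_slice b g \<alpha>" if "t < g (molecule b p q)" for p q
    using that molecule_in_free_space dnorm_molecule_le_1 by (auto simp: free_slice_def t_def)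
  show ?thesis
    using \<open>s = 1 \<or> s = -1\<close>
  proof
    assume "s = 1"
    then show ?thesis
      using uv deep in_slice by auto
  next
    assume "s = -1"
    then have "t < g (molecule b v u)"
      using deep by (simp add: molecule_swap[of b u v])
    then show ?thesis
      using uv in_slice by (metis dist_commute)
  qed
qed

lemma Delta_pointI:
  assumes \<mu>: "\<mu> \<in> free_space b" "dnorm b \<mu> = 1"
    and far: "\<And>g \<alpha> \<epsilon>. g \<in> free_dual_sphere b \<Longrightarrow> \<alpha> > 0 \<Longrightarrow> \<mu> \<in> free_slice b g \<alpha> \<Longrightarrow> \<epsilon> > 0 \<Longrightarrow>
       \<exists>w\<in>free_slice b g \<alpha>. 2 - \<epsilon> < dnorm b (\<lambda>f. \<mu> f - w f)"
  shows "Delta_point b \<mu>"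
  unfolding Delta_point_def
proof (intro conjI ballI allI impI \<mu>)
  fix g \<alpha> assume g: "g \<in> free_dual_sphere b" and "\<alpha> > 0" and slice: "\<mu> \<in> free_slice b g \<alpha>"
  let ?D = "{dnorm b (\<lambda>f. \<mu> f - w f) | w. w \<in> free_slice b g \<alpha>}"
  have "dnorm b (\<lambda>f. \<mu> f - w f) \<le> 2" if "w \<in> free_slice b g \<alpha>" for w
  proof -
    have w: "w \<in> Lip0_dual b" "dnorm b w \<le> 1"
      using that by (auto simp: free_slice_def free_space_imp_Lip0_dual)
    have "dnorm b (\<lambda>f. \<mu> f + (-1) * w f) \<le> dnorm b \<mu> + \<bar>-1\<bar> * dnorm b w"
      using dnorm_add_le[OF free_space_imp_Lip0_dual[OF \<mu>(1)] Lip0_dual_cmult[OF w(1), of "-1"]]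
        dnorm_cmult_le[OF w(1), of "-1"] by linarith
    then show ?thesis using \<mu>(2) w(2) by simp
  qed
  then have upper: "z \<le> 2" if "z \<in> ?D" for z
    using that by blast
  show "Sup ?D = 2"
  proof (rule antisym)
    show "Sup ?D \<le> 2"
      using slice upper by (intro cSup_least) blast+
    show "2 \<le> Sup ?D"
    proof (rule field_le_epsilon)
      fix \<epsilon> :: real assume "\<epsilon> > 0"
      then obtain w where "w \<in> free_slice b g \<alpha>" "2 - \<epsilon> < dnorm b (\<lambda>f. \<mu> f - w f)"
        using far[OF g \<open>\<alpha> > 0\<close> slice] by blast
      moreover have "bdd_above ?D"
        using upper by (intro bdd_aboveI)
      ultimately show "2 \<le> Sup ?D + \<epsilon>"
        using cSup_upper[of "dnorm b (\<lambda>f. \<mu> f - w f)" ?D] by fastforce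
    qed
  qed
qed

theorem proposition6p3:
  fixes b :: "'a::metric_space" and \<mu> :: "('a \<Rightarrow> real) \<Rightarrow> real"
  assumes "\<mu> \<in> free_space b" and "dnorm b \<mu> = 1"
    and "\<forall>\<eta>>0. \<exists>(a::nat \<Rightarrow> real) (x::nat \<Rightarrow> 'a) (y::nat \<Rightarrow> 'a).
           (\<forall>k. x k \<noteq> y k) \<and> summable (\<lambda>k. \<bar>a k\<bar>) \<and> (\<Sum>k. \<bar>a k\<bar>) < 1 + \<eta>
         \<and> (\<lambda>n. dnorm b (\<lambda>f. \<mu> f - (\<Sum>k<n. a k * molecule b (x k) (y k) f))) \<longlonglongrightarrow> 0
         \<and> (\<forall>k. discretely_connectable (x k) (y k))"
  shows "Delta_point b \<mu>"
proof (rule Delta_pointI[OF assms(1,2)])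
  fix g and \<alpha> \<epsilon> :: real
  assume g: "g \<in> free_dual_sphere b" and slice: "\<mu> \<in> free_slice b g \<alpha>" and "\<epsilon> > 0"
  obtain \<delta> where "\<delta> > 0" and far: "\<forall>u v. u \<noteq> v \<longrightarrow> dist u v < \<delta> \<longrightarrow>
      2 - \<epsilon> < dnorm b (\<lambda>f. \<mu> f - molecule b u v f)"
    using dnorm_diff_short_molecule_gt[OF assms(1,2) \<open>\<epsilon> > 0\<close>] by blast
  have "\<forall>\<eta>>0. connectable_molecular_series b \<mu> \<eta>"
    using assms(3) unfolding connectable_molecular_series_def .
  then obtain u v where "u \<noteq> v" "dist u v < \<delta>" "molecule b u v \<in> free_slice b g \<alpha>"
    using free_slice_contains_short_molecule[OF g assms(1,2) _ slice \<open>\<delta> > 0\<close>] by blast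
  then show "\<exists>w\<in>free_slice b g \<alpha>. 2 - \<epsilon> < dnorm b (\<lambda>f. \<mu> f - w f)"
    using far by blast
qed

end
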